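(* Let $\{q_k:k\ge0\}$ be a non-decreasing sequence of nonnegative numbers with $q_0>0$, and let $N\in\mathbb N$ and $n\ge M_N$. Then there is a constant $c>0$ (independent of $n,N$) such that for all $x\in G_m$ $$\left|\frac1{Q_n}\sum_{j=M_N}^{n}q_{n-j}D_j(x)\right|\le\frac{c}{M_N}\sum_{j=0}^{|n|}M_j\,|K_{M_j}(x)|.$$
   Context: Let $m=(m_0,m_1,\dots)$ be a bounded sequence of integers $m_k\ge 2$; $G_m=\prod_k Z_{m_k}$; $M_0=1$, $M_{k+1}=m_kM_k$, $n=\sum_j n_jM_j$ with $n_j\in Z_{m_j}$. $r_k(x)=\exp(2\pi i x_k/m_k)$, $\psi_n=\prod_k r_k^{n_k}$, $D_n=\sum_{k=0}^{n-1}\psi_k$, $K_n=\frac1n\sum_{k=1}^nD_k$. $Q_n=\sum_{k=0}^{n-1}q_k$. For $n\in\mathbb N_+$, $|n|$ denotes the unique integer with $M_{|n|}\le n<M_{|n|+1}$. *)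

theory Defs
  imports "HOL-Analysis.Analysis"
begin

text \<open>The group G_m = prod_k Z_{m_k}, as sequences x with 0 \<le> x_k < m_k.\<close>
definition vil_group :: "(nat \<Rightarrow> nat) \<Rightarrow> (nat \<Rightarrow> nat) set" where
  "vil_group m = {x. \<forall>k. x k < m k}"

definition vil_M :: "(nat \<Rightarrow> nat) \<Rightarrow> nat \<Rightarrow> nat" where
  "vil_M m k = (\<Prod>j<k. m j)"

definition vil_digit :: "(nat \<Rightarrow> nat) \<Rightarrow> nat \<Rightarrow> nat \<Rightarrow> nat" where
  "vil_digit m n j = (n div vil_M m j) mod m j"

definition vil_r :: "(nat \<Rightarrow> nat) \<Rightarrow> nat \<Rightarrow> (nat \<Rightarrow> nat) \<Rightarrow> complex" where
  "vil_r m k x = exp (2 * complex_of_real pi * \<i> * of_nat (x k) / of_nat (m k))"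

text \<open>psi_n = prod_k r_k^{n_k}; only the finitely many factors with n_k \<noteq> 0 differ from 1.\<close>
definition vil_psi :: "(nat \<Rightarrow> nat) \<Rightarrow> nat \<Rightarrow> (nat \<Rightarrow> nat) \<Rightarrow> complex" where
  "vil_psi m n x = (\<Prod>k \<in> {k. vil_digit m n k \<noteq> 0}. vil_r m k x ^ vil_digit m n k)"

definition vil_D :: "(nat \<Rightarrow> nat) \<Rightarrow> nat \<Rightarrow> (nat \<Rightarrow> nat) \<Rightarrow> complex" where
  "vil_D m n x = (\<Sum>k<n. vil_psi m k x)"

definition vil_K :: "(nat \<Rightarrow> nat) \<Rightarrow> nat \<Rightarrow> (nat \<Rightarrow> nat) \<Rightarrow> complex" where
  "vil_K m n x = (1 / of_nat n) * (\<Sum>k=1..n. vil_D m k x)"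

definition Qsum :: "(nat \<Rightarrow> real) \<Rightarrow> nat \<Rightarrow> real" where
  "Qsum q n = (\<Sum>k<n. q k)"

text \<open>|n|: the unique s with M_s \<le> n < M_{s+1} (for n \<ge> 1).\<close>
definition vil_abs :: "(nat \<Rightarrow> nat) \<Rightarrow> nat \<Rightarrow> nat" where
  "vil_abs m n = (THE s. vil_M m s \<le> n \<and> n < vil_M m (Suc s))"

end

(*
  Let F_J = D_0 + ... + D_(J-1) (Dsum J below), so that F_(n+1) = n K_n and D_j = F_(j+1) - F_j. Abel summation
  against the nonincreasing weights j \<mapsto> q_(n-j) bounds the sum by 2 q_(n-M_N) max_(j\<le>n+1) |F_j|,
  and Q_n \<ge> M_N q_(n-M_N). It remains to bound |F_J| for J \<le> M_(P+1) by
  C \<Sum>_(u\<le>P) M_u |K_(M_u)|. Write J = c M_P + e with c \<le> m_P and e < M_P; the shift formula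
  D_(c M_P + a) = D_(c M_P) + \<psi>_(c M_P) D_a expresses F_J through D_(M_P), F_(M_P) and F_e.
  Since D_(M_P) = \<Prod>_(i<P) \<Sum>_(d<m_i) r_i^d is 0 unless x vanishes below P, in which case
  D_(M_P) = M_P and M_P K_(M_P) = M_P (M_P + 1) / 2, both D_(M_P) and F_(M_P) are controlled by
  M_P |K_(M_P)|, and induction on P gives the bound with C = 7 (sup m)^2.
*)

theory Submission
  imports Defs
begin

lemma sum_lessThan_add:
  fixes a b :: nat
  shows "(\<Sum>k<a + b. f k) = (\<Sum>k<a. f k) + (\<Sum>k<b. f (a + k))"
  by (induction b) (auto simp: add.assoc)

lemma ex1_strict_mono_bracket:
  fixes f :: "nat \<Rightarrow> nat"
  assumes "strict_mono f" "f 0 \<le> n"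
  shows "\<exists>!s. f s \<le> n \<and> n < f (Suc s)"
proof -
  have ex: "\<exists>k. n < f k"
    using strict_mono_imp_increasing[OF assms(1), of "Suc n"] Suc_le_lessD by blast
  define k where "k = (LEAST k. n < f k)"
  have "n < f k" unfolding k_def by (rule LeastI_ex[OF ex])
  moreover have "f k' \<le> n" if "k' < k" for k'
    using not_less_Least[of k' "\<lambda>k. n < f k"] that unfolding k_def by simp
  moreover have "k \<noteq> 0" using \<open>n < f k\<close> assms(2) by (cases k) auto
  ultimately obtain s where "f s \<le> n" "n < f (Suc s)"
    by (metis lessI not0_implies_Suc)
  moreover have "s' = s" if "f s' \<le> n" "n < f (Suc s')" for s'
  proof (rule linorder_cases[of s' s])
    assume "s' < s"
    then have "f (Suc s') \<le> f s" using assms(1) by (simp add: strict_mono_less_eq)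
    then show ?thesis using that \<open>f s \<le> n\<close> by simp
  next
    assume "s < s'"
    then have "f (Suc s) \<le> f s'" using assms(1) by (simp add: strict_mono_less_eq)
    then show ?thesis using that \<open>n < f (Suc s)\<close> by simp
  qed
  ultimately show ?thesis by blast
qed

lemma norm_sum_antimono_weighted_differences:
  fixes w :: "nat \<Rightarrow> real" and g :: "nat \<Rightarrow> 'a::real_normed_vector"
  assumes w: "antimono w" "\<And>j. 0 \<le> w j"
    and g: "\<And>j. a \<le> j \<Longrightarrow> j \<le> Suc n \<Longrightarrow> norm (g j) \<le> B"
    and "a \<le> n"
  shows "norm (\<Sum>j=a..n. w j *\<^sub>R (g (Suc j) - g j)) \<le> 2 * w a * B"
proof -
  \<comment> \<open>Summation by parts: subtracting the boundary term, each step costs only the decrement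
      of w, and these decrements add up to at most w a.\<close>
  have "norm ((\<Sum>j=a..k. w j *\<^sub>R (g (Suc j) - g j)) - w k *\<^sub>R g (Suc k)) \<le> (2 * w a - w k) * B"
    if "a \<le> k" "k \<le> n" for k
    using that
  proof (induction k rule: dec_induct)
    case base
    then show ?case using g[of a] w(2)[of a] by (simp add: scaleR_diff_right mult_left_mono)
  next
    case (step k)
    have dec: "0 \<le> w k - w (Suc k)" using w(1) by (simp add: antimono_def)
    have "(\<Sum>j=a..Suc k. w j *\<^sub>R (g (Suc j) - g j)) - w (Suc k) *\<^sub>R g (Suc (Suc k))
        = ((\<Sum>j=a..k. w j *\<^sub>R (g (Suc j) - g j)) - w k *\<^sub>R g (Suc k))
          + (w k - w (Suc k)) *\<^sub>R g (Suc k)"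
      using step.hyps by (simp add: algebra_simps)
    also have "norm \<dots> \<le> (2 * w a - w k) * B + (w k - w (Suc k)) * B"
      using step g[of "Suc k"] dec
      by (intro norm_triangle_le add_mono) (auto intro: mult_left_mono)
    finally show ?case by (simp add: algebra_simps)
  qed
  then have "norm (\<Sum>j=a..n. w j *\<^sub>R (g (Suc j) - g j)) \<le> (2 * w a - w n) * B + norm (w n *\<^sub>R g (Suc n))"
    using norm_triangle_sub[of "\<Sum>j=a..n. w j *\<^sub>R (g (Suc j) - g j)" "w n *\<^sub>R g (Suc n)"] assms(4)
    by fastforce
  also have "norm (w n *\<^sub>R g (Suc n)) \<le> w n * B"
    using g[of "Suc n"] w(2)[of n] assms(4) by (simp add: mult_left_mono)
  finally show ?thesis by (simp add: algebra_simps)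
qed

lemma mult_le_Qsum:
  assumes "mono q" "\<And>k. 0 \<le> q k" "k \<le> n"
  shows "real k * q (n - k) \<le> Qsum q n"
proof -
  have "real k * q (n - k) = (\<Sum>i\<in>{n - k..<n}. q (n - k))" using assms(3) by simp
  also have "\<dots> \<le> (\<Sum>i\<in>{n - k..<n}. q i)" using assms(1) by (intro sum_mono) (auto simp: mono_def)
  also have "\<dots> \<le> (\<Sum>i<n. q i)" using assms(2) by (intro sum_mono2) auto
  finally show ?thesis unfolding Qsum_def .
qed

lemma Qsum_pos:
  assumes "\<And>k. 0 \<le> q k" "0 < q 0" "0 < n"
  shows "0 < Qsum q n"
proof -
  have "q 0 \<le> (\<Sum>k<n. q k)" using assms by (intro member_le_sum) auto
  then show ?thesis unfolding Qsum_def using assms(2) by linarith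
qed

lemma divide_Qsum_le:
  assumes "mono q" "\<And>k. 0 \<le> q k" "0 < q 0" "0 < k" "k \<le> n"
  shows "q (n - k) / Qsum q n \<le> 1 / k"
  using mult_le_Qsum[OF assms(1,2,5)] Qsum_pos[of q n] assms
  by (simp add: field_simps)

locale vilenkin =
  fixes m :: "nat \<Rightarrow> nat"
  assumes m_ge2: "\<And>k. 2 \<le> m k"
begin

abbreviation "M \<equiv> vil_M m"
abbreviation "digit \<equiv> vil_digit m"
abbreviation "r \<equiv> vil_r m"
abbreviation "psi \<equiv> vil_psi m"
abbreviation "D \<equiv> vil_D m"

lemma M_0 [simp]: "M 0 = 1"
  by (simp add: vil_M_def)

lemma M_Suc: "M (Suc k) = M k * m k"
  by (simp add: vil_M_def)

lemma M_pos: "0 < M k"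
proof (induction k)
  case (Suc k)
  then show ?case using m_ge2[of k] by (simp add: M_Suc)
qed simp

lemma strict_mono_M: "strict_mono M"
proof (rule strict_monoI_Suc)
  fix k show "M k < M (Suc k)" using M_pos[of k] m_ge2[of k] by (simp add: M_Suc)
qed

lemma M_mono: "i \<le> j \<Longrightarrow> M i \<le> M j"
  using strict_mono_M strict_mono_less_eq by blast

lemma less_M_Suc: "n < M (Suc n)"
  using strict_mono_imp_increasing[OF strict_mono_M, of "Suc n"] by simp

lemma M_dvd: "i \<le> j \<Longrightarrow> M i dvd M j"
  unfolding vil_M_def by (rule prod_dvd_prod_subset) auto

lemma less_M_Suc_vil_abs: "1 \<le> n \<Longrightarrow> n < M (Suc (vil_abs m n))"
  using theI'[OF ex1_strict_mono_bracket[OF strict_mono_M]] unfolding vil_abs_def by simp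

lemma digit_eq_0: "k < M i \<Longrightarrow> digit k i = 0"
  by (simp add: vil_digit_def)

lemma digit_M_mult_below:
  assumes "i < p" shows "digit (M p * b) i = 0"
proof -
  obtain R where R: "M p = M i * m i * R"
    using M_dvd[of "Suc i" p] assms by (auto simp: M_Suc dvd_def)
  have "M p * b div M i = m i * (R * b)"
    using M_pos[of i] by (simp add: R mult.assoc mult.left_commute)
  then show ?thesis by (simp add: vil_digit_def)
qed

lemma digit_add_M_mult:
  assumes "a < M p"
  shows "digit (M p * b + a) k = digit (M p * b) k + digit a k"
proof (cases "k < p")
  case True
  then obtain R where R: "M p = M k * m k * R"
    using M_dvd[of "Suc k" p] by (auto simp: M_Suc dvd_def)
  have sum_eq: "M p * b + a = a + (m k * (R * b)) * M k" by (simp add: R algebra_simps)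
  have "(M p * b + a) div M k = m k * (R * b) + a div M k"
    unfolding sum_eq using M_pos[of k] by (simp add: div_mult_self1)
  then show ?thesis using digit_M_mult_below[OF True, of b] by (simp add: vil_digit_def)
next
  case False
  then obtain R where R: "M k = M p * R" using M_dvd[of p k] by (auto simp: dvd_def)
  have "(M p * b + a) div M k = M p * b div M k"
    using M_pos[of p] assms by (simp add: R div_mult2_eq)
  moreover have "a < M k" using assms M_mono[of p k] False by simp
  ultimately show ?thesis by (simp add: vil_digit_def)
qed

lemma digit_M_mult:
  assumes "d < m p" shows "digit (M p * d) i = (if i = p then d else 0)"
proof (cases i p rule: linorder_cases)
  case less then show ?thesis using digit_M_mult_below by simp
next
  case equal then show ?thesis using M_pos[of p] assms by (simp add: vil_digit_def)
next
  case greater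
  have "M p * d < M (Suc p)" using assms M_pos[of p] by (simp add: M_Suc)
  also have "\<dots> \<le> M i" using greater by (intro M_mono) simp
  finally show ?thesis using greater digit_eq_0 by simp
qed

lemma psi_eq_prod:
  assumes "n < M L" shows "psi n x = (\<Prod>k<L. r k x ^ digit n k)"
proof -
  have "{k. digit n k \<noteq> 0} \<subseteq> {..<L}"
  proof
    fix k assume "k \<in> {k. digit n k \<noteq> 0}"
    then have "\<not> n < M k" using digit_eq_0 by auto
    then show "k \<in> {..<L}" using assms M_mono[of L k] by (cases "k < L") auto
  qed
  then show ?thesis unfolding vil_psi_def by (intro prod.mono_neutral_left) auto
qed

lemma psi_add_M_mult:
  assumes "a < M p" shows "psi (M p * b + a) x = psi (M p * b) x * psi a x"
proof -
  define L where "L = Suc (M p * b + a)"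
  have L: "M p * b + a < M L" "M p * b < M L" "a < M L"
    using less_M_Suc[of "M p * b + a"] unfolding L_def by auto
  show ?thesis
    unfolding psi_eq_prod[OF L(1)] psi_eq_prod[OF L(2)] psi_eq_prod[OF L(3)] digit_add_M_mult[OF assms]
    by (simp add: power_add prod.distrib)
qed

lemma psi_eq_1:
  assumes "\<And>i. digit k i = 0 \<or> x i = 0" shows "psi k x = 1"
  unfolding vil_psi_def
proof (rule prod.neutral, intro ballI)
  fix i assume "i \<in> {i. digit k i \<noteq> 0}"
  then have "x i = 0" using assms[of i] by auto
  then show "r i x ^ digit k i = 1" by (simp add: vil_r_def)
qed

lemma norm_psi: "cmod (psi n x) = 1"
  unfolding vil_psi_def vil_r_def by (simp add: prod_norm[symmetric] norm_power norm_exp_eq_Re)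

lemma psi_M_mult:
  assumes "d < m p" shows "psi (M p * d) x = r p x ^ d"
proof -
  have "M p * d < M (Suc p)" using assms M_pos[of p] by (simp add: M_Suc)
  then show ?thesis using digit_M_mult[OF assms] by (simp add: psi_eq_prod prod.lessThan_Suc)
qed

lemma r_pow_m: "r p x ^ m p = 1"
proof -
  have "r p x ^ m p = exp (of_nat (m p) * (2 * complex_of_real pi * \<i> * of_nat (x p) / of_nat (m p)))"
    unfolding vil_r_def by (simp only: exp_of_nat_mult)
  also have "\<dots> = exp (2 * complex_of_real pi * \<i> * of_nat (x p))"
    using m_ge2[of p] by (simp add: field_simps)
  also have "\<dots> = 1"
    by (simp add: exp_eq_1) (metis of_int_of_nat_eq)
  finally show ?thesis .
qed

lemma r_neq_1:
  assumes "x p \<noteq> 0" "x p < m p" shows "r p x \<noteq> 1"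
proof
  assume "r p x = 1"
  then obtain n :: int where n: "2 * pi * real (x p) / real (m p) = of_int (2 * n) * pi"
    unfolding vil_r_def exp_eq_1 by auto
  then have "real (x p) = of_int n * real (m p)"
    using m_ge2[of p] by (simp add: field_simps)
  then have "int (x p) = n * int (m p)"
    by (metis of_int_eq_iff of_int_mult of_int_of_nat_eq)
  then have "m p dvd x p"
    by (metis dvd_triv_right int_dvd_int_iff)
  then show False using assms by (simp add: nat_dvd_not_less)
qed

lemma sum_r_powers_eq_0:
  assumes "x p \<noteq> 0" "x p < m p" shows "(\<Sum>d<m p. r p x ^ d) = 0"
  using geometric_sum[OF r_neq_1[where x=x and p=p, OF assms], of "m p"] r_pow_m[of p x] by simp

lemma D_0 [simp]: "D 0 x = 0"
  by (simp add: vil_D_def)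

lemma D_add_M_mult:
  assumes "a \<le> M p"
  shows "D (M p * c + a) x = D (M p * c) x + psi (M p * c) x * D a x"
proof -
  have "D (M p * c + a) x = D (M p * c) x + (\<Sum>k<a. psi (M p * c + k) x)"
    unfolding vil_D_def by (rule sum_lessThan_add)
  also have "(\<Sum>k<a. psi (M p * c + k) x) = psi (M p * c) x * D a x"
    unfolding vil_D_def sum_distrib_left using assms by (intro sum.cong refl psi_add_M_mult) auto
  finally show ?thesis .
qed

lemma D_M_mult: "D (M p * c) x = D (M p) x * (\<Sum>c'<c. psi (M p * c') x)"
proof (induction c)
  case (Suc c)
  have "D (M p * Suc c) x = D (M p * c + M p) x" by (simp add: add.commute)
  then show ?case using D_add_M_mult[of "M p" p c x] Suc by (simp add: algebra_simps)
qed simp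

lemma D_M_eq_prod: "D (M p) x = (\<Prod>i<p. \<Sum>d<m i. r i x ^ d)"
proof (induction p)
  case 0
  have "psi 0 x = 1" by (rule psi_eq_1) (simp add: vil_digit_def)
  then show ?case by (simp add: vil_D_def)
next
  case (Suc p)
  have "(\<Sum>d<m p. psi (M p * d) x) = (\<Sum>d<m p. r p x ^ d)"
    by (intro sum.cong refl psi_M_mult) simp
  then show ?case
    using D_M_mult[of p "m p" x] Suc by (simp add: M_Suc)
qed

lemma vanishes_below_if_D_M_neq_0:
  assumes "x \<in> vil_group m" "D (M p) x \<noteq> 0" "i < p"
  shows "x i = 0"
proof (rule ccontr)
  assume "x i \<noteq> 0"
  then have "(\<Sum>d<m i. r i x ^ d) = 0"
    using assms(1) by (intro sum_r_powers_eq_0) (auto simp: vil_group_def)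
  then show False using assms(2,3) by (simp add: D_M_eq_prod)
qed

lemma D_eq_of_nat:
  assumes "\<And>i. i < p \<Longrightarrow> x i = 0" "k \<le> M p"
  shows "D k x = of_nat k"
proof -
  have "psi j x = 1" if "j < M p" for j
  proof (rule psi_eq_1)
    fix i show "digit j i = 0 \<or> x i = 0"
      using assms(1)[of i] digit_eq_0[of j i] that M_mono[of p i] by linarith
  qed
  then show ?thesis unfolding vil_D_def using assms(2) by simp
qed

lemma norm_D_M_mult: "cmod (D (M p * c) x) \<le> c * cmod (D (M p) x)"
proof -
  have "cmod (\<Sum>c'<c. psi (M p * c') x) \<le> (\<Sum>c'<c. cmod (psi (M p * c') x))"
    by (rule norm_sum)
  then show ?thesis
    unfolding D_M_mult norm_mult by (simp add: norm_psi mult.commute[of "real c"] mult_left_mono)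
qed

definition Dsum :: "nat \<Rightarrow> (nat \<Rightarrow> nat) \<Rightarrow> complex" where
  "Dsum n x = (\<Sum>k<n. D k x)"

lemma Dsum_Suc: "Dsum (Suc n) x = Dsum n x + D n x"
  by (simp add: Dsum_def)

lemma M_norm_K_M: "real (M u) * cmod (vil_K m (M u) x) = cmod (Dsum (Suc (M u)) x)"
proof -
  have "(\<Sum>k=1..n. D k x) = Dsum (Suc n) x" for n
    by (induction n) (simp_all add: Dsum_def)
  then show ?thesis
    using M_pos[of u] unfolding vil_K_def by (simp add: norm_mult norm_divide)
qed

lemma Dsum_add_M_mult:
  assumes "a \<le> M p"
  shows "Dsum (M p * c + a) x
    = Dsum (M p * c) x + of_nat a * D (M p * c) x + psi (M p * c) x * Dsum a x"
proof -
  have "Dsum (M p * c + a) x = Dsum (M p * c) x + (\<Sum>k<a. D (M p * c + k) x)"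
    unfolding Dsum_def by (rule sum_lessThan_add)
  also have "(\<Sum>k<a. D (M p * c + k) x) = of_nat a * D (M p * c) x + psi (M p * c) x * Dsum a x"
    unfolding Dsum_def sum_distrib_left using assms
    by (simp add: D_add_M_mult sum.distrib)
  finally show ?thesis by (simp add: add.assoc)
qed

lemma norm_Dsum_M_mult:
  "cmod (Dsum (M p * c) x) \<le> (real c)\<^sup>2 * (M p * cmod (D (M p) x)) + c * cmod (Dsum (M p) x)"
proof (induction c)
  case (Suc c)
  let ?A = "M p * cmod (D (M p) x)"
  have "Dsum (M p * Suc c) x
      = Dsum (M p * c) x + of_nat (M p) * D (M p * c) x + psi (M p * c) x * Dsum (M p) x"
    unfolding mult_Suc_right add.commute[of "M p"] by (rule Dsum_add_M_mult) simp
  moreover have "real (M p) * cmod (D (M p * c) x) \<le> c * ?A"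
    using mult_left_mono[OF norm_D_M_mult[of p c x], of "real (M p)"] by (simp add: mult.left_commute)
  ultimately have "cmod (Dsum (M p * Suc c) x) \<le> cmod (Dsum (M p * c) x) + c * ?A + cmod (Dsum (M p) x)"
    by (auto simp: norm_mult norm_psi intro!: norm_triangle_le add_mono)
  also have "\<dots> \<le> (real (Suc c))\<^sup>2 * ?A + Suc c * cmod (Dsum (M p) x)"
  proof -
    have "c * ?A \<le> (2 * c + 1) * ?A" by (intro mult_right_mono) auto
    moreover have "(real (Suc c))\<^sup>2 * ?A = (real c)\<^sup>2 * ?A + (2 * c + 1) * ?A"
      by (simp add: power2_eq_square algebra_simps)
    moreover have "real (Suc c) * cmod (Dsum (M p) x) = c * cmod (Dsum (M p) x) + cmod (Dsum (M p) x)"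
      by (simp add: algebra_simps)
    ultimately show ?thesis using Suc by linarith
  qed
  finally show ?case .
qed (simp add: Dsum_def)

lemma M_norm_D_M_le:
  assumes "x \<in> vil_group m"
  shows "M p * cmod (D (M p) x) \<le> 2 * cmod (Dsum (Suc (M p)) x)"
proof (cases "D (M p) x = 0")
  case False
  then have below: "\<And>i. i < p \<Longrightarrow> x i = 0"
    using vanishes_below_if_D_M_neq_0[OF assms] by blast
  have "Dsum (Suc (M p)) x = (\<Sum>k\<in>{0..M p}. of_nat k)"
    unfolding Dsum_def lessThan_Suc_atMost atLeast0AtMost using D_eq_of_nat[OF below] by simp
  then have "2 * Dsum (Suc (M p)) x = of_nat (M p * (M p + 1))"
    by (simp add: double_gauss_sum algebra_simps)
  then have "2 * cmod (Dsum (Suc (M p)) x) = M p * (M p + 1)"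
    by (metis norm_mult norm_numeral norm_of_nat of_nat_numeral)
  moreover have "D (M p) x = of_nat (M p)" using D_eq_of_nat[OF below] by simp
  ultimately show ?thesis by simp
qed simp

lemma norm_Dsum_M_le:
  assumes "x \<in> vil_group m"
  shows "cmod (Dsum (M p) x) \<le> 3 * cmod (Dsum (Suc (M p)) x)"
proof -
  have "cmod (D (M p) x) \<le> M p * cmod (D (M p) x)"
    using M_pos[of p] by (simp add: mult_le_cancel_right1)
  then have "cmod (D (M p) x) \<le> 2 * cmod (Dsum (Suc (M p)) x)"
    using M_norm_D_M_le[OF assms, of p] by linarith
  moreover have "cmod (Dsum (M p) x) \<le> cmod (Dsum (Suc (M p)) x) + cmod (D (M p) x)"
    using norm_triangle_ineq4[of "Dsum (Suc (M p)) x" "D (M p) x"] by (simp add: Dsum_Suc)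
  ultimately show ?thesis by linarith
qed

lemma norm_Dsum_add_M_mult_le:
  assumes "x \<in> vil_group m" "c \<le> B" "e \<le> M p"
  shows "cmod (Dsum (M p * c + e) x) \<le> 7 * (real B)\<^sup>2 * cmod (Dsum (Suc (M p)) x) + cmod (Dsum e x)"
proof -
  define T where "T = cmod (Dsum (Suc (M p)) x)"
  define A where "A = M p * cmod (D (M p) x)"
  have A: "A \<le> 2 * T" unfolding A_def T_def by (rule M_norm_D_M_le[OF assms(1)])
  have "e * cmod (D (M p * c) x) \<le> M p * (c * cmod (D (M p) x))"
    using assms(3) norm_D_M_mult[of p c x] by (intro mult_mono) auto
  then have "cmod (of_nat e * D (M p * c) x) \<le> c * A"
    unfolding A_def by (simp add: norm_mult mult.left_commute)
  then have "cmod (Dsum (M p * c + e) x) \<le> cmod (Dsum (M p * c) x) + c * A + cmod (Dsum e x)"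
    unfolding Dsum_add_M_mult[OF assms(3)]
    by (auto simp: norm_mult norm_psi intro!: norm_triangle_le add_mono)
  also have "cmod (Dsum (M p * c) x) \<le> (real c)\<^sup>2 * A + c * (3 * T)"
    using norm_Dsum_M_mult[of p c x] mult_left_mono[OF norm_Dsum_M_le[OF assms(1)], of "real c" p]
    unfolding A_def T_def by linarith
  also have "(real c)\<^sup>2 * A + c * (3 * T) + c * A + cmod (Dsum e x)
      \<le> (2 * (real c)\<^sup>2 + 5 * c) * T + cmod (Dsum e x)"
    using A mult_left_mono[OF A, of "(real c)\<^sup>2"] mult_left_mono[OF A, of "real c"]
    by (simp add: algebra_simps)
  also have "(2 * (real c)\<^sup>2 + 5 * c) * T \<le> 7 * (real B)\<^sup>2 * T"
  proof (rule mult_right_mono)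
    have "real c \<le> (real c)\<^sup>2" by (cases c) (auto simp: power2_eq_square)
    moreover have "(real c)\<^sup>2 \<le> (real B)\<^sup>2" using assms(2) by (simp add: power_mono)
    ultimately show "2 * (real c)\<^sup>2 + 5 * c \<le> 7 * (real B)\<^sup>2" by linarith
  qed (simp add: T_def)
  finally show ?thesis unfolding T_def by simp
qed

lemma norm_Dsum_le_sum_Fejer:
  assumes "x \<in> vil_group m" "\<And>k. m k \<le> B" "J \<le> M P"
  shows "cmod (Dsum J x) \<le> 7 * (real B)\<^sup>2 * (\<Sum>u<P. cmod (Dsum (Suc (M u)) x))"
  using assms(3)
proof (induction P arbitrary: J)
  case 0
  then have "J = 0 \<or> J = 1" by auto
  then show ?case by (auto simp: Dsum_def)
next
  case (Suc P)
  define c where "c = J div M P"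
  define e where "e = J mod M P"
  have "c \<le> m P"
    using div_le_mono[OF Suc.prems[unfolded M_Suc], of "M P"] M_pos[of P] unfolding c_def by simp
  then have "c \<le> B" using assms(2)[of P] by simp
  moreover have "e \<le> M P" using M_pos[of P] unfolding e_def by (simp add: less_imp_le)
  moreover have "J = M P * c + e" unfolding c_def e_def by simp
  ultimately have "cmod (Dsum J x) \<le> 7 * (real B)\<^sup>2 * cmod (Dsum (Suc (M P)) x) + cmod (Dsum e x)"
    using norm_Dsum_add_M_mult_le[OF assms(1), of c B e P] by simp
  also have "cmod (Dsum e x) \<le> 7 * (real B)\<^sup>2 * (\<Sum>u<P. cmod (Dsum (Suc (M u)) x))"
    using Suc.IH \<open>e \<le> M P\<close> .
  finally show ?case by (simp add: algebra_simps)
qed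

lemma norm_weighted_sum_D_le:
  assumes "x \<in> vil_group m" "\<And>k. m k \<le> B" "antimono w" "\<And>j. 0 \<le> w j" "1 \<le> a" "a \<le> n"
  shows "cmod (\<Sum>j = a..n. complex_of_real (w j) * D j x)
    \<le> 14 * (real B)\<^sup>2 * w a * (\<Sum>j = 0..vil_abs m n. real (M j) * cmod (vil_K m (M j) x))"
proof -
  define S where "S = (\<Sum>j = 0..vil_abs m n. real (M j) * cmod (vil_K m (M j) x))"
  have "n < M (Suc (vil_abs m n))" using assms(5,6) by (intro less_M_Suc_vil_abs) simp
  then have Dsum_le: "cmod (Dsum j x) \<le> 7 * (real B)\<^sup>2 * S" if "j \<le> Suc n" for j
    using norm_Dsum_le_sum_Fejer[OF assms(1,2), of j "Suc (vil_abs m n)"] that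
    unfolding S_def M_norm_K_M atLeast0AtMost lessThan_Suc_atMost by simp
  have "(\<Sum>j = a..n. complex_of_real (w j) * D j x) = (\<Sum>j = a..n. w j *\<^sub>R (Dsum (Suc j) x - Dsum j x))"
    by (simp add: Dsum_Suc scaleR_conv_of_real)
  also have "cmod \<dots> \<le> 2 * w a * (7 * (real B)\<^sup>2 * S)"
    using assms(3,4,6) Dsum_le by (intro norm_sum_antimono_weighted_differences) auto
  finally show ?thesis unfolding S_def by (simp add: algebra_simps)
qed

end

theorem mainTheorem5:
  fixes m :: "nat \<Rightarrow> nat" and q :: "nat \<Rightarrow> real"
  assumes m_ge2: "\<And>k. m k \<ge> 2"
    and m_bdd: "bdd_above (range m)"
    and q_mono: "mono q"
    and q_nonneg: "\<And>k. q k \<ge> 0"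
    and q0_pos: "q 0 > 0"
  shows "\<exists>c>0. \<forall>N n x. vil_M m N \<le> n \<and> x \<in> vil_group m \<longrightarrow>
     cmod ((1 / complex_of_real (Qsum q n)) *
           (\<Sum>j = vil_M m N..n. complex_of_real (q (n - j)) * vil_D m j x))
     \<le> c / real (vil_M m N) *
        (\<Sum>j = 0..vil_abs m n. real (vil_M m j) * cmod (vil_K m (vil_M m j) x))"
proof -
  interpret vilenkin m using m_ge2 by unfold_locales
  obtain B :: nat where B: "\<And>k. m k \<le> B" using m_bdd by (auto simp: bdd_above_def)
  have "2 \<le> B" using m_ge2[of 0] B[of 0] by simp
  show ?thesis
  proof (intro exI[of _ "14 * (real B)\<^sup>2"] conjI allI impI)
    show "0 < 14 * (real B)\<^sup>2" using \<open>2 \<le> B\<close> by simp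
    fix N n x assume "M N \<le> n \<and> x \<in> vil_group m"
    then have n: "M N \<le> n" and x: "x \<in> vil_group m" by auto
    define S where "S = (\<Sum>j = 0..vil_abs m n. real (M j) * cmod (vil_K m (M j) x))"
    have "antimono (\<lambda>j. q (n - j))" using q_mono by (auto simp: antimono_def mono_def)
    then have "cmod (\<Sum>j = M N..n. complex_of_real (q (n - j)) * D j x) \<le> 14 * (real B)\<^sup>2 * q (n - M N) * S"
      unfolding S_def using M_pos[of N] n
      by (intro norm_weighted_sum_D_le[OF x B] q_nonneg) simp_all
    moreover have "0 < Qsum q n" "q (n - M N) / Qsum q n \<le> 1 / M N"
      using Qsum_pos divide_Qsum_le q_mono q_nonneg q0_pos M_pos[of N] n by auto
    moreover have "0 \<le> S" unfolding S_def by (simp add: sum_nonneg)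
    ultimately show "cmod ((1 / complex_of_real (Qsum q n)) * (\<Sum>j = M N..n. complex_of_real (q (n - j)) * D j x))
        \<le> 14 * (real B)\<^sup>2 / real (M N) * S"
      using mult_left_mono[of "q (n - M N) / Qsum q n" "1 / M N" "14 * (real B)\<^sup>2 * S"]
      by (auto simp: norm_mult norm_divide divide_right_mono field_simps)
  qed
qed

end
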